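(* Let $T$ be a commutative ring with identity, $S$ a unital subring and $I$ a nil ideal of $T$ with $T=S+I$ and $S\cap I=\{0\}$. Then: (1) $T$ is almost complemented if and only if $S$ is almost complemented; (2) $T$ is $\pi$-complemented if and only if $S$ is $\pi$-complemented and $I$ is a torsion-free $S$-module; (3) $T$ has Property $D^\flat$ if and only if $S$ has Property $D^\flat$.
   Context: For a ring $A$, $\mathfrak{N}(A)$ is the nilradical, $\mathrm{reg}(A)$ the regular elements, $\mathrm{areg}(A)=\{x: x+\mathfrak{N}(A)\in\mathrm{reg}(A/\mathfrak{N}(A))\}$. An element $a$ is complemented if there is $b$ with $ab=0$, $a+b\in\mathrm{reg}(A)$; $A$ is complemented if all elements are; $A$ is almost complemented if $A/\mathfrak{N}(A)$ is complemented; $A$ is $\pi$-complemented if every element has a complemented power. $A$ has Property $D^\flat$ if $A\setminus\mathfrak{N}(A)=\mathrm{areg}(A)$. An $S$-module $M$ is torsion-free if $rm=0$ with $r\in\mathrm{reg}(S)$ implies $m=0$. *)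

theory Defs
  imports "HOL-Algebra.Algebra"
begin

definition nilrad :: "('a, 'b) ring_scheme \<Rightarrow> 'a set" where
  "nilrad R = {x \<in> carrier R. \<exists>n::nat. x [^]\<^bsub>R\<^esub> n = \<zero>\<^bsub>R\<^esub>}"

definition reg :: "('a, 'b) ring_scheme \<Rightarrow> 'a set" where
  "reg R = {x \<in> carrier R. \<forall>y \<in> carrier R. x \<otimes>\<^bsub>R\<^esub> y = \<zero>\<^bsub>R\<^esub> \<longrightarrow> y = \<zero>\<^bsub>R\<^esub>}"

definition areg :: "('a, 'b) ring_scheme \<Rightarrow> 'a set" where
  "areg R = {x \<in> carrier R. nilrad R +>\<^bsub>R\<^esub> x \<in> reg (R Quot nilrad R)}"

definition complemented_elem :: "('a, 'b) ring_scheme \<Rightarrow> 'a \<Rightarrow> bool" where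
  "complemented_elem R a \<longleftrightarrow>
     (\<exists>b \<in> carrier R. a \<otimes>\<^bsub>R\<^esub> b = \<zero>\<^bsub>R\<^esub> \<and> a \<oplus>\<^bsub>R\<^esub> b \<in> reg R)"

definition complemented :: "('a, 'b) ring_scheme \<Rightarrow> bool" where
  "complemented R \<longleftrightarrow> (\<forall>a \<in> carrier R. complemented_elem R a)"

definition almost_complemented :: "('a, 'b) ring_scheme \<Rightarrow> bool" where
  "almost_complemented R \<longleftrightarrow> complemented (R Quot nilrad R)"

definition pi_complemented :: "('a, 'b) ring_scheme \<Rightarrow> bool" where
  "pi_complemented R \<longleftrightarrow>
     (\<forall>a \<in> carrier R. \<exists>n::nat. n \<ge> 1 \<and> complemented_elem R (a [^]\<^bsub>R\<^esub> n))"

definition property_D_flat :: "('a, 'b) ring_scheme \<Rightarrow> bool" where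
  "property_D_flat R \<longleftrightarrow> carrier R - nilrad R = areg R"

text \<open>Torsion-freeness of a subset M of the ring T as a module over the
  subring with carrier S (the action being multiplication in T).\<close>
definition torsion_free_over :: "('a, 'b) ring_scheme \<Rightarrow> 'a set \<Rightarrow> 'a set \<Rightarrow> bool" where
  "torsion_free_over T S M \<longleftrightarrow>
     (\<forall>r \<in> reg (T\<lparr>carrier := S\<rparr>). \<forall>m \<in> M. r \<otimes>\<^bsub>T\<^esub> m = \<zero>\<^bsub>T\<^esub> \<longrightarrow> m = \<zero>\<^bsub>T\<^esub>)"

end

theory Submission
  imports Defs
begin

text \<open>
  Write every element of T as s + i with s \<in> S and i \<in> I. Since I is nil, adding i changes
  neither nilpotency, nor regularity, nor regularity modulo the nilradical, and since
  S \<inter> I = 0, an element of S is regular in T iff it is regular in S and annihilates no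
  nonzero element of I. Hence T/N(T) and S/N(S) are matched elementwise by s + i \<mapsto> s,
  which gives (1) and (3). For (2), a complement in T of a power of s \<in> S may be replaced by
  its S-component; so if r \<in> S is regular, some power r^n is regular in T, and I is
  torsion-free. Conversely, if s^n has the complement b in S and s^n + b stays regular in T
  (which is what torsion-freeness provides), then (s + i)^(nq) has the complement b^q as soon
  as q exceeds the nilpotency index of the I-part of (s + i)^n.
\<close>

section \<open>Quotient rings\<close>

lemma (in ideal) add_right_mem_iff:
  assumes "x \<in> carrier R" and "a \<in> I"
  shows "x \<oplus> a \<in> I \<longleftrightarrow> x \<in> I"
proof
  assume "x \<oplus> a \<in> I"
  then have "(x \<oplus> a) \<ominus> a \<in> I"
    using assms(2) by (simp add: a_minus_def a_closed a_inv_closed)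
  then show "x \<in> I"
    using assms Icarr by (simp add: a_minus_def a_assoc r_neg)
qed (use assms a_closed in blast)

lemma (in ideal) Quot_carrier: "carrier (R Quot I) = (+>) I ` carrier R"
  unfolding FactRing_def A_RCOSETS_def' by auto

lemma (in ideal) Quot_zero: "\<zero>\<^bsub>R Quot I\<^esub> = I"
  by (simp add: FactRing_def)

lemma (in ideal) Quot_add:
  "x \<in> carrier R \<Longrightarrow> y \<in> carrier R \<Longrightarrow> (I +> x) \<oplus>\<^bsub>R Quot I\<^esub> (I +> y) = I +> (x \<oplus> y)"
  by (simp add: FactRing_def a_rcos_sum)

lemma (in ideal) Quot_mult:
  "x \<in> carrier R \<Longrightarrow> y \<in> carrier R \<Longrightarrow> (I +> x) \<otimes>\<^bsub>R Quot I\<^esub> (I +> y) = I +> (x \<otimes> y)"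
  by (simp add: FactRing_def rcoset_mult_add)

lemma (in ideal) rcos_eq_self_iff: "x \<in> carrier R \<Longrightarrow> I +> x = I \<longleftrightarrow> x \<in> I"
  using rcos_const_imp_mem a_rcos_zero[OF ideal_axioms] by blast

lemma (in ideal) rcos_reg_Quot_iff:
  assumes "x \<in> carrier R"
  shows "I +> x \<in> reg (R Quot I) \<longleftrightarrow> (\<forall>y\<in>carrier R. x \<otimes> y \<in> I \<longrightarrow> y \<in> I)"
  using assms by (auto simp: reg_def Quot_carrier Quot_mult Quot_zero rcos_eq_self_iff)

lemma (in ideal) complemented_Quot_iff:
  "complemented (R Quot I) \<longleftrightarrow>
     (\<forall>a\<in>carrier R. \<exists>b\<in>carrier R. a \<otimes> b \<in> I \<and> I +> (a \<oplus> b) \<in> reg (R Quot I))"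
  unfolding complemented_def complemented_elem_def
  by (auto simp: Quot_carrier Quot_add Quot_mult Quot_zero rcos_eq_self_iff)

section \<open>The nilradical\<close>

lemma (in ideal) nat_pow_add_ideal:
  assumes s: "s \<in> carrier R" and i: "i \<in> I"
  shows "\<exists>j\<in>I. (s \<oplus> i) [^] (m::nat) = s [^] m \<oplus> j"
proof (induction m)
  case 0
  show ?case
    using s additive_subgroup.zero_closed[OF is_additive_subgroup] by (intro bexI[of _ \<zero>]) simp_all
next
  case (Suc m)
  from Suc.IH obtain j where j: "j \<in> I" and IH: "(s \<oplus> i) [^] m = s [^] m \<oplus> j" ..
  have ic: "i \<in> carrier R" and jc: "j \<in> carrier R" using i j Icarr by auto
  have "(s \<oplus> i) [^] Suc m = (s [^] m \<oplus> j) \<otimes> (s \<oplus> i)"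
    by (simp add: IH)
  also have "\<dots> = s [^] Suc m \<oplus> (s [^] m \<otimes> i \<oplus> j \<otimes> (s \<oplus> i))"
    using s ic jc by (simp add: l_distr r_distr a_ac)
  finally have "(s \<oplus> i) [^] Suc m = s [^] Suc m \<oplus> (s [^] m \<otimes> i \<oplus> j \<otimes> (s \<oplus> i))" .
  moreover have "s [^] m \<otimes> i \<oplus> j \<otimes> (s \<oplus> i) \<in> I"
    using s i j ic by (simp add: a_closed I_l_closed I_r_closed)
  ultimately show ?case by blast
qed

lemma property_D_flat_iff:
  "property_D_flat R \<longleftrightarrow> (\<forall>x\<in>carrier R. x \<notin> nilrad R \<longleftrightarrow> x \<in> areg R)"
  unfolding property_D_flat_def areg_def by auto

context cring
begin

lemma nilradI: "x \<in> carrier R \<Longrightarrow> x [^] (n::nat) = \<zero> \<Longrightarrow> x \<in> nilrad R"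
  unfolding nilrad_def by blast

lemma nilradE:
  assumes "x \<in> nilrad R"
  obtains n :: nat where "x \<in> carrier R" and "x [^] n = \<zero>"
  using assms unfolding nilrad_def by blast

lemma nilrad_mult_closed:
  assumes a: "a \<in> nilrad R" and x: "x \<in> carrier R"
  shows "x \<otimes> a \<in> nilrad R"
proof -
  obtain n :: nat where "a \<in> carrier R" "a [^] n = \<zero>" using a by (rule nilradE)
  then show ?thesis using x by (intro nilradI[of _ n]) (simp_all add: nat_pow_distrib)
qed

lemma nilrad_add_closed:
  assumes a: "a \<in> nilrad R" and b: "b \<in> nilrad R"
  shows "a \<oplus> b \<in> nilrad R"
proof -
  obtain m :: nat where ac: "a \<in> carrier R" and am: "a [^] m = \<zero>" using a by (rule nilradE)
  obtain k :: nat where bc: "b \<in> carrier R" and bk: "b [^] k = \<zero>" using b by (rule nilradE)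
  \<comment> \<open>Expanding in the principal ideal of a: (b + a)^k = b^k + x a = x a, whose m-th power vanishes.\<close>
  obtain j where j: "j \<in> PIdl a" and e: "(b \<oplus> a) [^] k = b [^] k \<oplus> j"
    using ideal.nat_pow_add_ideal[OF cgenideal_ideal[OF ac] bc cgenideal_self[OF ac]] by blast
  then obtain x where x: "x \<in> carrier R" and "(b \<oplus> a) [^] k = x \<otimes> a"
    using ac bk by (auto simp: cgenideal_def)
  then have "(a \<oplus> b) [^] (k * m) = x [^] m \<otimes> a [^] m"
    using ac bc by (simp add: nat_pow_pow[symmetric] a_comm nat_pow_distrib)
  then show ?thesis using ac bc am x by (intro nilradI[of _ "k * m"]) simp_all
qed

lemma nilrad_ideal: "ideal (nilrad R) R"
proof (rule idealI)
  show "subgroup (nilrad R) (add_monoid R)"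
  proof
    fix a assume a: "a \<in> nilrad R"
    then have "inv\<^bsub>add_monoid R\<^esub> a = \<ominus> \<one> \<otimes> a"
      by (auto simp: a_inv_def[symmetric] l_minus elim: nilradE)
    then show "inv\<^bsub>add_monoid R\<^esub> a \<in> nilrad R" using nilrad_mult_closed[OF a] by simp
  qed (auto simp: nilrad_add_closed elim: nilradE intro: nilradI[of _ 1])
  show "x \<otimes> a \<in> nilrad R" "a \<otimes> x \<in> nilrad R" if "a \<in> nilrad R" "x \<in> carrier R" for a x
    using that nilrad_mult_closed m_comm by (auto simp: nilrad_def)
qed (rule ring_axioms)

lemma zero_nilrad [simp]: "\<zero> \<in> nilrad R"
  by (rule nilradI[of _ 1]) simp_all

lemma nilrad_add_iff: "x \<in> carrier R \<Longrightarrow> n \<in> nilrad R \<Longrightarrow> x \<oplus> n \<in> nilrad R \<longleftrightarrow> x \<in> nilrad R"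
  by (rule ideal.add_right_mem_iff[OF nilrad_ideal])

lemma mult_add_nilrad_iff:
  assumes a: "a \<in> carrier R" and b: "b \<in> carrier R" and n: "n \<in> nilrad R" and m: "m \<in> nilrad R"
  shows "(a \<oplus> n) \<otimes> (b \<oplus> m) \<in> nilrad R \<longleftrightarrow> a \<otimes> b \<in> nilrad R"
proof -
  interpret N: ideal "nilrad R" R by (rule nilrad_ideal)
  have nc: "n \<in> carrier R" and mc: "m \<in> carrier R" using n m N.Icarr by auto
  have "(a \<oplus> n) \<otimes> (b \<oplus> m) = a \<otimes> b \<oplus> (n \<otimes> (b \<oplus> m) \<oplus> a \<otimes> m)"
    using a b nc mc by (simp add: l_distr r_distr a_ac)
  moreover have "n \<otimes> (b \<oplus> m) \<oplus> a \<otimes> m \<in> nilrad R"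
    using a b n m mc by (simp add: N.a_closed N.I_l_closed N.I_r_closed)
  ultimately show ?thesis using a b by (simp add: nilrad_add_iff)
qed

lemma areg_iff:
  "x \<in> areg R \<longleftrightarrow> x \<in> carrier R \<and> (\<forall>y\<in>carrier R. x \<otimes> y \<in> nilrad R \<longrightarrow> y \<in> nilrad R)"
  unfolding areg_def using ideal.rcos_reg_Quot_iff[OF nilrad_ideal] by blast

lemma areg_add_nilrad_iff:
  assumes x: "x \<in> carrier R" and n: "n \<in> nilrad R"
  shows "x \<oplus> n \<in> areg R \<longleftrightarrow> x \<in> areg R"
proof -
  have "(x \<oplus> n) \<otimes> y \<in> nilrad R \<longleftrightarrow> x \<otimes> y \<in> nilrad R" if "y \<in> carrier R" for y
    using mult_add_nilrad_iff[OF x that n zero_nilrad] that by simp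
  moreover have "x \<oplus> n \<in> carrier R" using x n by (auto elim: nilradE)
  ultimately show ?thesis using x by (auto simp: areg_iff)
qed

lemma almost_complemented_iff:
  "almost_complemented R \<longleftrightarrow> (\<forall>a\<in>carrier R. \<exists>b\<in>carrier R. a \<otimes> b \<in> nilrad R \<and> a \<oplus> b \<in> areg R)"
  unfolding almost_complemented_def ideal.complemented_Quot_iff[OF nilrad_ideal] areg_def by auto

section \<open>Regular and complemented elements\<close>

lemma reg_mult:
  assumes x: "x \<in> reg R" and y: "y \<in> reg R"
  shows "x \<otimes> y \<in> reg R"
proof -
  have xc: "x \<in> carrier R" and yc: "y \<in> carrier R" using x y by (simp_all add: reg_def)
  have "z = \<zero>" if z: "z \<in> carrier R" and "x \<otimes> y \<otimes> z = \<zero>" for z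
  proof -
    have "x \<otimes> (y \<otimes> z) = \<zero>" using xc yc z that(2) by (simp add: m_assoc)
    then have "y \<otimes> z = \<zero>" using x yc z unfolding reg_def by blast
    then show ?thesis using y z unfolding reg_def by blast
  qed
  then show ?thesis using xc yc by (simp add: reg_def)
qed

lemma reg_nat_pow: "x \<in> reg R \<Longrightarrow> x [^] (k::nat) \<in> reg R"
  by (induction k) (auto simp: reg_mult, simp add: reg_def)

lemma reg_add_nilrad:
  assumes x: "x \<in> reg R" and n: "n \<in> nilrad R"
  shows "x \<oplus> n \<in> reg R"
proof -
  interpret N: ideal "nilrad R" R by (rule nilrad_ideal)
  have xc: "x \<in> carrier R" using x by (simp add: reg_def)
  have nc: "n \<in> carrier R" using n N.Icarr by blast
  obtain k :: nat where nk: "(\<ominus> n) [^] k = \<zero>" using N.a_inv_closed[OF n] by (rule nilradE)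
  have "y = \<zero>" if y: "y \<in> carrier R" and xny: "(x \<oplus> n) \<otimes> y = \<zero>" for y
  proof -
    have xy: "x \<otimes> y = \<ominus> n \<otimes> y"
      using xc nc y xny by (simp add: l_distr l_minus sum_zero_eq_neg)
    have "x [^] i \<otimes> y = (\<ominus> n) [^] i \<otimes> y" for i :: nat
    proof (induction i)
      case (Suc i)
      have "x [^] Suc i \<otimes> y = x [^] i \<otimes> (x \<otimes> y)" using xc y by (simp add: m_assoc)
      also have "\<dots> = \<ominus> n \<otimes> (x [^] i \<otimes> y)" using xc nc y by (simp only: xy) (simp add: m_lcomm)
      also have "\<dots> = (\<ominus> n) [^] Suc i \<otimes> y" using nc y by (simp add: Suc.IH m_ac)
      finally show ?case .
    qed (use y in simp)
    then have "x [^] k \<otimes> y = \<zero>" using nk y by simp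
    then show "y = \<zero>" using reg_nat_pow[OF x] y by (simp add: reg_def)
  qed
  then show ?thesis using xc nc by (simp add: reg_def)
qed

lemma reg_add_nilrad_iff:
  assumes x: "x \<in> carrier R" and n: "n \<in> nilrad R"
  shows "x \<oplus> n \<in> reg R \<longleftrightarrow> x \<in> reg R"
proof
  interpret N: ideal "nilrad R" R by (rule nilrad_ideal)
  assume "x \<oplus> n \<in> reg R"
  then have "(x \<oplus> n) \<oplus> \<ominus> n \<in> reg R" using reg_add_nilrad N.a_inv_closed[OF n] by blast
  then show "x \<in> reg R" using x n N.Icarr by (simp add: a_assoc r_neg)
qed (use reg_add_nilrad n in blast)

lemma nat_pow_add_orthogonal:
  assumes a: "a \<in> carrier R" and b: "b \<in> carrier R" and ab: "a \<otimes> b = \<zero>"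
  shows "(a \<oplus> b) [^] Suc k = a [^] Suc k \<oplus> b [^] Suc k"
proof (induction k)
  case (Suc k)
  have "a [^] Suc k \<otimes> b = \<zero>" "b [^] Suc k \<otimes> a = \<zero>"
    using a b ab by (simp_all add: m_assoc m_comm[of b a])
  then have "(a [^] Suc k \<oplus> b [^] Suc k) \<otimes> (a \<oplus> b) = a [^] Suc (Suc k) \<oplus> b [^] Suc (Suc k)"
    using a b by (simp add: l_distr r_distr del: nat_pow_Suc)
  then show ?case by (simp only: nat_pow_Suc[of "a \<oplus> b" "Suc k"] Suc.IH)
qed (simp add: a b)

lemma complemented_elem_pow_add_nilrad:
  assumes a: "a \<in> carrier R" and ca: "complemented_elem R a" and j: "j \<in> nilrad R"
  shows "\<exists>q::nat. q \<ge> 1 \<and> complemented_elem R ((a \<oplus> j) [^] q)"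
proof -
  obtain b where b: "b \<in> carrier R" and ab: "a \<otimes> b = \<zero>" and reg: "a \<oplus> b \<in> reg R"
    using ca unfolding complemented_elem_def by blast
  obtain p :: nat where jc: "j \<in> carrier R" and jp: "j [^] p = \<zero>" using j by (rule nilradE)
  \<comment> \<open>q is positive, as the expansion of (a + b)^q below requires, and still kills j.\<close>
  define q where "q = Suc p"
  have "(a \<oplus> j) [^] q \<otimes> b [^] q = (j \<otimes> b) [^] q"
    using a jc b ab by (simp add: nat_pow_distrib[symmetric] l_distr)
  also have "\<dots> = \<zero>" using jc b jp by (simp add: q_def nat_pow_distrib)
  finally have orth: "(a \<oplus> j) [^] q \<otimes> b [^] q = \<zero>" .
  obtain j' where j': "j' \<in> nilrad R" and e: "(a \<oplus> j) [^] q = a [^] q \<oplus> j'"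
    using ideal.nat_pow_add_ideal[OF nilrad_ideal a j] by blast
  have j'c: "j' \<in> carrier R" using j' by (auto elim: nilradE)
  have "(a \<oplus> j) [^] q \<oplus> b [^] q = (a [^] q \<oplus> b [^] q) \<oplus> j'"
    using a b j'c by (simp add: e a_ac)
  also have "a [^] q \<oplus> b [^] q = (a \<oplus> b) [^] q"
    unfolding q_def using nat_pow_add_orthogonal[OF a b ab] by simp
  finally have "(a \<oplus> j) [^] q \<oplus> b [^] q = (a \<oplus> b) [^] q \<oplus> j'" .
  then have "(a \<oplus> j) [^] q \<oplus> b [^] q \<in> reg R"
    using reg_add_nilrad[OF reg_nat_pow[OF reg] j'] by simp
  with orth b have "complemented_elem R ((a \<oplus> j) [^] q)"
    unfolding complemented_elem_def by (intro bexI[of _ "b [^] q"]) simp_all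
  then show ?thesis by (intro exI[of _ q]) (simp add: q_def)
qed

end

section \<open>Splitting off a nil ideal\<close>

locale nil_split = cring R for R (structure) +
  fixes S I :: "'a set"
  assumes subring_S: "subring S R" and ideal_I: "ideal I R" and I_nilrad: "I \<subseteq> nilrad R"
    and carrier_split: "carrier R = S <+> I" and S_Int_I: "S \<inter> I = {\<zero>}"
begin

sublocale I: ideal I R by (rule ideal_I)

abbreviation S_ring where "S_ring \<equiv> R\<lparr>carrier := S\<rparr>"

lemma S_subset: "S \<subseteq> carrier R"
  using subringE(1)[OF subring_S] .

lemma S_zero: "\<zero> \<in> S"
  using subringE(2)[OF subring_S] .

lemma S_add: "a \<in> S \<Longrightarrow> b \<in> S \<Longrightarrow> a \<oplus> b \<in> S"
  using subringE(7)[OF subring_S] .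

lemma S_mult: "a \<in> S \<Longrightarrow> b \<in> S \<Longrightarrow> a \<otimes> b \<in> S"
  using subringE(6)[OF subring_S] .

lemma S_nat_pow_closed: "a \<in> S \<Longrightarrow> a [^] (n::nat) \<in> S"
  by (induction n) (simp_all add: S_mult subringE(3)[OF subring_S])

lemma cring_S: "cring S_ring"
  using subcring_iff[OF S_subset] subcringI'[OF subring_S] by blast

lemma nat_pow_S: "x [^]\<^bsub>S_ring\<^esub> (n::nat) = x [^] n"
  by (simp add: nat_pow_def)

lemma carrier_splitE:
  assumes "x \<in> carrier R"
  obtains s i where "s \<in> S" and "i \<in> I" and "x = s \<oplus> i"
  using assms carrier_split by (auto simp: set_add_def')

lemma split_eq_zero:
  assumes s: "s \<in> S" and i: "i \<in> I" and si: "s \<oplus> i = \<zero>"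
  shows "s = \<zero> \<and> i = \<zero>"
proof -
  have "s = \<ominus> i" using s i si S_subset I.Icarr by (simp add: sum_zero_eq_neg subsetD)
  then have "s \<in> I" using i by (simp add: I.a_inv_closed)
  then have "s = \<zero>" using s S_Int_I by blast
  then show ?thesis using si i I.Icarr by simp
qed

lemma nilrad_S: "nilrad S_ring = nilrad R \<inter> S"
  using S_subset by (auto simp: nilrad_def nat_pow_S)

lemma reg_S: "reg S_ring = {x \<in> S. \<forall>y\<in>S. x \<otimes> y = \<zero> \<longrightarrow> y = \<zero>}"
  by (simp add: reg_def)

lemma areg_S_iff: "s \<in> areg S_ring \<longleftrightarrow> s \<in> S \<and> (\<forall>y\<in>S. s \<otimes> y \<in> nilrad R \<longrightarrow> y \<in> nilrad R)"
  using cring.areg_iff[OF cring_S] S_mult by (auto simp: nilrad_S)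

lemma nilrad_split_iff: "s \<in> S \<Longrightarrow> i \<in> I \<Longrightarrow> s \<oplus> i \<in> nilrad R \<longleftrightarrow> s \<in> nilrad S_ring"
  using nilrad_add_iff I_nilrad S_subset by (auto simp: nilrad_S)

lemma areg_iff_areg_S:
  assumes s: "s \<in> S"
  shows "s \<in> areg R \<longleftrightarrow> s \<in> areg S_ring"
proof -
  have "s \<otimes> (s' \<oplus> i') \<in> nilrad R \<longleftrightarrow> s \<otimes> s' \<in> nilrad R" if "s' \<in> S" "i' \<in> I" for s' i'
    using mult_add_nilrad_iff[of s s' \<zero> i'] s that S_subset I_nilrad by auto
  moreover have "s' \<oplus> i' \<in> nilrad R \<longleftrightarrow> s' \<in> nilrad R" if "s' \<in> S" "i' \<in> I" for s' i'
    using nilrad_add_iff that S_subset I_nilrad by auto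
  ultimately show ?thesis
    using s S_subset S_zero by (auto simp: areg_iff areg_S_iff elim!: carrier_splitE)
qed

lemma areg_split_iff: "s \<in> S \<Longrightarrow> i \<in> I \<Longrightarrow> s \<oplus> i \<in> areg R \<longleftrightarrow> s \<in> areg S_ring"
  using areg_add_nilrad_iff areg_iff_areg_S S_subset I_nilrad by blast

lemma nil_complement_split_iff:
  assumes s: "s \<in> S" "s' \<in> S" and i: "i \<in> I" "i' \<in> I"
  shows "(s \<oplus> i) \<otimes> (s' \<oplus> i') \<in> nilrad R \<and> (s \<oplus> i) \<oplus> (s' \<oplus> i') \<in> areg R
    \<longleftrightarrow> s \<otimes> s' \<in> nilrad S_ring \<and> s \<oplus> s' \<in> areg S_ring"
proof -
  have sc: "s \<in> carrier R" "s' \<in> carrier R" using s S_subset by auto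
  have "(s \<oplus> i) \<oplus> (s' \<oplus> i') = (s \<oplus> s') \<oplus> (i \<oplus> i')"
    using sc i I.Icarr by (simp add: a_ac)
  then show ?thesis
    using mult_add_nilrad_iff[OF sc] i I_nilrad areg_split_iff[OF S_add[OF s] I.a_closed[OF i]]
    by (auto simp: nilrad_S S_mult[OF s])
qed

lemma almost_complemented_iff_S: "almost_complemented R \<longleftrightarrow> almost_complemented S_ring"
proof -
  have "almost_complemented S_ring \<longleftrightarrow>
      (\<forall>a\<in>S. \<exists>b\<in>S. a \<otimes> b \<in> nilrad S_ring \<and> a \<oplus> b \<in> areg S_ring)"
    using cring.almost_complemented_iff[OF cring_S] by simp
  also have "\<dots> \<longleftrightarrow> (\<forall>a\<in>carrier R. \<exists>b\<in>carrier R. a \<otimes> b \<in> nilrad R \<and> a \<oplus> b \<in> areg R)"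
  proof (intro iffI ballI)
    fix a assume a: "a \<in> carrier R"
      and S_compl: "\<forall>a\<in>S. \<exists>b\<in>S. a \<otimes> b \<in> nilrad S_ring \<and> a \<oplus> b \<in> areg S_ring"
    from a obtain s i where s: "s \<in> S" and i: "i \<in> I" and a_split: "a = s \<oplus> i"
      by (rule carrier_splitE)
    then obtain s' where "s' \<in> S" and "s \<otimes> s' \<in> nilrad S_ring \<and> s \<oplus> s' \<in> areg S_ring"
      using S_compl by blast
    then show "\<exists>b\<in>carrier R. a \<otimes> b \<in> nilrad R \<and> a \<oplus> b \<in> areg R"
      using nil_complement_split_iff[OF s \<open>s' \<in> S\<close> i I.zero_closed] a_split S_subset
      by (intro bexI[of _ "s' \<oplus> \<zero>"]) auto
  next
    fix a assume s: "a \<in> S"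
      and R_compl: "\<forall>a\<in>carrier R. \<exists>b\<in>carrier R. a \<otimes> b \<in> nilrad R \<and> a \<oplus> b \<in> areg R"
    then obtain b where "b \<in> carrier R" and "a \<otimes> b \<in> nilrad R \<and> a \<oplus> b \<in> areg R"
      using S_subset by blast
    moreover from \<open>b \<in> carrier R\<close> obtain s' i' where "s' \<in> S" "i' \<in> I" "b = s' \<oplus> i'"
      by (rule carrier_splitE)
    ultimately show "\<exists>b\<in>S. a \<otimes> b \<in> nilrad S_ring \<and> a \<oplus> b \<in> areg S_ring"
      using nil_complement_split_iff[OF s \<open>s' \<in> S\<close> I.zero_closed \<open>i' \<in> I\<close>] s S_subset by auto
  qed
  finally show ?thesis by (simp add: almost_complemented_iff)
qed

lemma property_D_flat_iff_S: "property_D_flat R \<longleftrightarrow> property_D_flat S_ring"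
proof -
  have split: "(s \<oplus> i \<notin> nilrad R \<longleftrightarrow> s \<oplus> i \<in> areg R) \<longleftrightarrow> (s \<notin> nilrad S_ring \<longleftrightarrow> s \<in> areg S_ring)"
    if "s \<in> S" "i \<in> I" for s i
    using nilrad_split_iff[OF that] areg_split_iff[OF that] by simp
  show ?thesis
  proof
    assume "property_D_flat R"
    then show "property_D_flat S_ring"
      using split[OF _ I.zero_closed] S_subset by (auto simp: property_D_flat_iff)
  next
    assume "property_D_flat S_ring"
    then show "property_D_flat R"
      using split by (auto simp: property_D_flat_iff elim!: carrier_splitE)
  qed
qed

lemma reg_iff_reg_S:
  assumes s: "s \<in> S"
  shows "s \<in> reg R \<longleftrightarrow> s \<in> reg S_ring \<and> (\<forall>i\<in>I. s \<otimes> i = \<zero> \<longrightarrow> i = \<zero>)"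
proof
  assume "s \<in> reg R"
  then have "y = \<zero>" if "y \<in> carrier R" "s \<otimes> y = \<zero>" for y
    using that unfolding reg_def by blast
  then show "s \<in> reg S_ring \<and> (\<forall>i\<in>I. s \<otimes> i = \<zero> \<longrightarrow> i = \<zero>)"
    using s S_subset I.Icarr by (auto simp: reg_S)
next
  assume s_reg: "s \<in> reg S_ring \<and> (\<forall>i\<in>I. s \<otimes> i = \<zero> \<longrightarrow> i = \<zero>)"
  have sc: "s \<in> carrier R" using s S_subset by blast
  have "y = \<zero>" if "y \<in> carrier R" and sy: "s \<otimes> y = \<zero>" for y
  proof -
    from \<open>y \<in> carrier R\<close> obtain s' i' where s': "s' \<in> S" and i': "i' \<in> I" and y: "y = s' \<oplus> i'"
      by (rule carrier_splitE)
    have "s \<otimes> s' \<oplus> s \<otimes> i' = \<zero>"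
      using sy sc s' i' S_subset I.Icarr by (simp add: y r_distr subsetD)
    then have "s \<otimes> s' = \<zero> \<and> s \<otimes> i' = \<zero>"
      using split_eq_zero S_mult[OF s s'] I.I_l_closed[OF i' sc] by blast
    then have "s' = \<zero>" and "i' = \<zero>" using s_reg s' i' by (auto simp: reg_S)
    then show "y = \<zero>" by (simp add: y)
  qed
  then show "s \<in> reg R" using sc by (simp add: reg_def)
qed

lemma reg_S_imp_reg:
  assumes "torsion_free_over R S I" and "s \<in> reg S_ring"
  shows "s \<in> reg R"
  using assms reg_iff_reg_S[of s] unfolding torsion_free_over_def reg_S by blast

lemma pi_complemented_S_iff:
  "pi_complemented S_ring \<longleftrightarrow> (\<forall>a\<in>S. \<exists>n::nat. n \<ge> 1 \<and> complemented_elem S_ring (a [^] n))"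
  by (simp add: pi_complemented_def nat_pow_S)

lemma complemented_elem_in_S:
  assumes a: "a \<in> S" and "complemented_elem R a"
  obtains s where "s \<in> S" and "a \<otimes> s = \<zero>" and "a \<oplus> s \<in> reg R"
proof -
  have ac: "a \<in> carrier R" using a S_subset by blast
  obtain b where "b \<in> carrier R" and ab: "a \<otimes> b = \<zero>" and reg: "a \<oplus> b \<in> reg R"
    using assms(2) unfolding complemented_elem_def by blast
  then obtain s i where s: "s \<in> S" and i: "i \<in> I" and b: "b = s \<oplus> i" by (elim carrier_splitE)
  have sc: "s \<in> carrier R" using s S_subset by blast
  have "a \<otimes> s \<oplus> a \<otimes> i = \<zero>" using ab ac sc i I.Icarr by (simp add: b r_distr)
  then have "a \<otimes> s = \<zero>" using split_eq_zero S_mult[OF a s] I.I_l_closed[OF i ac] by blast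
  moreover have "a \<oplus> s \<in> reg R"
    using reg ac sc i I.Icarr I_nilrad reg_add_nilrad_iff[of "a \<oplus> s" i] by (auto simp: b a_assoc)
  ultimately show ?thesis using that s by blast
qed

lemma pi_complemented_S:
  assumes "pi_complemented R"
  shows "pi_complemented S_ring"
  unfolding pi_complemented_S_iff
proof
  fix a assume a: "a \<in> S"
  then obtain n :: nat where n: "n \<ge> 1" and a_compl: "complemented_elem R (a [^] n)"
    using assms S_subset unfolding pi_complemented_def by blast
  obtain s where "s \<in> S" and "a [^] n \<otimes> s = \<zero>" and "a [^] n \<oplus> s \<in> reg R"
    by (rule complemented_elem_in_S[OF S_nat_pow_closed[OF a] a_compl])
  then have "complemented_elem S_ring (a [^] n)"
    using reg_iff_reg_S S_add[OF S_nat_pow_closed[OF a]] by (auto simp: complemented_elem_def)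
  then show "\<exists>n::nat. n \<ge> 1 \<and> complemented_elem S_ring (a [^] n)" using n by blast
qed

lemma torsion_free_if_pi_complemented:
  assumes "pi_complemented R"
  shows "torsion_free_over R S I"
  unfolding torsion_free_over_def
proof (intro ballI impI)
  fix r m assume r: "r \<in> reg S_ring" and m: "m \<in> I" and rm: "r \<otimes> m = \<zero>"
  have rS: "r \<in> S" and rc: "r \<in> carrier R" and mc: "m \<in> carrier R"
    using r m S_subset I.Icarr by (auto simp: reg_S)
  obtain n :: nat where n: "n \<ge> 1" and r_compl: "complemented_elem R (r [^] n)"
    using assms rc unfolding pi_complemented_def by blast
  obtain s where s: "s \<in> S" and rs: "r [^] n \<otimes> s = \<zero>" and rs_reg: "r [^] n \<oplus> s \<in> reg R"
    by (rule complemented_elem_in_S[OF S_nat_pow_closed[OF rS] r_compl])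
  \<comment> \<open>Regularity of r^n in S kills the S-part of its complement, so r^n is regular in R.\<close>
  have "r [^] n \<in> reg S_ring" using cring.reg_nat_pow[OF cring_S r] by (simp add: nat_pow_S)
  then have "s = \<zero>" using s rs by (simp add: reg_S)
  then have rn_reg: "r [^] n \<in> reg R" using rs_reg rc by simp
  obtain k where "n = Suc k" using n by (cases n) auto
  then have "r [^] n \<otimes> m = r [^] k \<otimes> (r \<otimes> m)" using rc mc by (simp add: m_assoc)
  then have "r [^] n \<otimes> m = \<zero>" using rm rc by simp
  then show "m = \<zero>" using rn_reg mc by (simp add: reg_def)
qed

lemma pi_complemented_if_S:
  assumes pi_S: "pi_complemented S_ring" and tf: "torsion_free_over R S I"
  shows "pi_complemented R"
  unfolding pi_complemented_def
proof
  fix t assume tc: "t \<in> carrier R"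
  then obtain s i where s: "s \<in> S" and i: "i \<in> I" and t: "t = s \<oplus> i" by (rule carrier_splitE)
  have sc: "s \<in> carrier R" using s S_subset by blast
  obtain n :: nat where n: "n \<ge> 1" and "complemented_elem S_ring (s [^] n)"
    using pi_S s unfolding pi_complemented_S_iff by blast
  then have s_compl: "complemented_elem R (s [^] n)"
    using S_subset reg_S_imp_reg[OF tf] by (auto simp: complemented_elem_def)
  obtain j where j: "j \<in> I" and tn: "t [^] n = s [^] n \<oplus> j"
    using I.nat_pow_add_ideal[OF sc i] t by blast
  obtain q :: nat where q: "q \<ge> 1" and "complemented_elem R ((s [^] n \<oplus> j) [^] q)"
    using complemented_elem_pow_add_nilrad[OF _ s_compl] j I_nilrad sc by blast
  moreover have "t [^] (n * q) = (s [^] n \<oplus> j) [^] q"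
    using tc by (simp add: nat_pow_pow[symmetric] tn del: nat_pow_pow)
  ultimately have "complemented_elem R (t [^] (n * q))" by simp
  moreover have "n * q \<ge> 1" using n q by simp
  ultimately show "\<exists>n::nat. n \<ge> 1 \<and> complemented_elem R (t [^] n)" by blast
qed

lemma pi_complemented_iff_S:
  "pi_complemented R \<longleftrightarrow> pi_complemented S_ring \<and> torsion_free_over R S I"
  using pi_complemented_S torsion_free_if_pi_complemented pi_complemented_if_S by blast

end

theorem mainTheorem11:
  fixes T :: "('a, 'b) ring_scheme" and S I :: "'a set"
  assumes "cring T"
    and "subring S T"
    and "ideal I T"
    and "I \<subseteq> nilrad T"
    and "carrier T = S <+>\<^bsub>T\<^esub> I"
    and "S \<inter> I = {\<zero>\<^bsub>T\<^esub>}"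
  shows "(almost_complemented T \<longleftrightarrow> almost_complemented (T\<lparr>carrier := S\<rparr>))
    \<and> (pi_complemented T \<longleftrightarrow>
         pi_complemented (T\<lparr>carrier := S\<rparr>) \<and> torsion_free_over T S I)
    \<and> (property_D_flat T \<longleftrightarrow> property_D_flat (T\<lparr>carrier := S\<rparr>))"
proof -
  interpret nil_split T S I
    by (intro nil_split.intro nil_split_axioms.intro) (rule assms)+
  show ?thesis
    using almost_complemented_iff_S pi_complemented_iff_S property_D_flat_iff_S by blast
qed

end
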